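(* Let $1<p<N$, $q>0$, $\mu>0$, and $g(s)=\frac{(p-1)^{q-p+1}}{\mu^q}(1+\mu s)^{p-1}|\ln(1+\mu s)|^{q-1}\ln(1+\mu s)$ for $s>-1/\mu$. Then for every $r\in(p-1,p)$: (1) if $q\ge p-1$, there exist constants $c_0,c_1>0$ such that $|g(s)|\le c_0|s|^r+c_1|s|^{p-1}$ for all $s>-1/\mu$; (2) if $0<q<p-1$, there exist constants $c_1,c_2>0$ such that $|g(s)|\le c_1|s|^r+c_2|s|^{q}$ for all $s>-1/\mu$. *)

theory Defs
  imports Complex_Main
begin

definition gfun :: "real \<Rightarrow> real \<Rightarrow> real \<Rightarrow> real \<Rightarrow> real" where
  "gfun p q \<mu> s = ((p - 1) powr (q - p + 1) / \<mu> powr q) * (1 + \<mu> * s) powr (p - 1)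
      * \<bar>ln (1 + \<mu> * s)\<bar> powr (q - 1) * ln (1 + \<mu> * s)"

end

theory Submission imports Defs begin

text \<open>Up to the positive factor (p-1) powr (q-p+1) / \<mu> powr q, |g(s)| is the weight
  w(x) = (1+x) powr (p-1) * |ln (1+x)| powr q at x = \<mu> s. Near x = 0 we have |ln (1+x)| \<le> 2|x|,
  so w is of order |x| powr q; near x = -1 the power (1+x) powr (p-1) beats the logarithm, so w
  is bounded; for large x the logarithm is absorbed by the extra power x powr (r-p+1).
  Away from 0, |x| is bounded below, so the first two bounds are dominated by |x| powr m for
  any 0 \<le> m \<le> q; take m = min q (p-1).\<close>

definition log_weight :: "real \<Rightarrow> real \<Rightarrow> real \<Rightarrow> real" where
  "log_weight a q x = (1 + x) powr a * \<bar>ln (1 + x)\<bar> powr q"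

lemma ln_le_powr_div:
  fixes y a :: real
  assumes "0 < y" "0 < a"
  shows "ln y \<le> y powr a / a"
proof -
  have "ln (y powr a) \<le> y powr a - 1"
    using assms by (intro ln_le_minus_one) simp
  hence "a * ln y \<le> y powr a"
    using assms by (simp add: ln_powr)
  thus ?thesis
    using assms by (simp add: field_simps)
qed

lemma abs_ln_one_plus_le:
  fixes x :: real
  assumes "\<bar>x\<bar> \<le> 1/2"
  shows "\<bar>ln (1 + x)\<bar> \<le> 2 * \<bar>x\<bar>"
proof (cases "x \<ge> 0")
  case True
  then show ?thesis
    using ln_add_one_self_le_self[of x] ln_ge_zero[of "1 + x"] by simp
next
  case False
  have x: "0 < 1 + x" "1 + x < 1"
    using assms False by auto
  have "- ln (1 + x) = ln (1 / (1 + x))"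
    using x by (simp add: ln_div)
  also have "\<dots> \<le> 1 / (1 + x) - 1"
    using x by (intro ln_le_minus_one) simp
  also have "\<dots> \<le> 2 * \<bar>x\<bar>"
  proof -
    have "x * (1 + 2 * x) \<le> 0"
      using assms False by (intro mult_nonpos_nonneg) auto
    thus ?thesis
      using x False by (simp add: field_simps)
  qed
  finally show ?thesis
    using x by simp
qed

lemma powr_mult_abs_ln_powr_le:
  fixes t a q :: real
  assumes "0 < t" "t \<le> 1" "0 < a" "0 < q"
  shows "t powr a * \<bar>ln t\<bar> powr q \<le> (q / a) powr q"
proof -
  have "\<bar>ln t\<bar> = ln (1 / t)"
    using assms by (simp add: ln_div)
  also have "\<dots> \<le> (1 / t) powr (a / q) / (a / q)"
    using assms by (intro ln_le_powr_div) auto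
  finally have "\<bar>ln t\<bar> powr q \<le> ((1 / t) powr (a / q) / (a / q)) powr q"
    using assms by (intro powr_mono2) auto
  also have "\<dots> = (q / a) powr q / t powr a"
    using assms by (simp add: powr_divide powr_mult powr_powr)
  finally have "t powr a * \<bar>ln t\<bar> powr q \<le> t powr a * ((q / a) powr q / t powr a)"
    by (intro mult_left_mono) auto
  also have "\<dots> = (q / a) powr q"
    using assms by simp
  finally show ?thesis .
qed

lemma abs_ln_powr_le_powr:
  fixes t d q :: real
  assumes "1 \<le> t" "0 < d" "0 < q"
  shows "\<bar>ln t\<bar> powr q \<le> (q / d) powr q * t powr d"
proof -
  have "\<bar>ln t\<bar> = ln t"
    using assms by simp
  also have "\<dots> \<le> t powr (d / q) / (d / q)"
    using assms by (intro ln_le_powr_div) auto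
  also have "\<dots> = (q / d) * t powr (d / q)"
    by simp
  finally have "\<bar>ln t\<bar> powr q \<le> ((q / d) * t powr (d / q)) powr q"
    using assms by (intro powr_mono2) auto
  also have "\<dots> = (q / d) powr q * (t powr (d / q)) powr q"
    using assms by (subst powr_mult) auto
  also have "\<dots> = (q / d) powr q * t powr d"
    using assms by (simp add: powr_powr)
  finally show ?thesis .
qed

lemma log_weight_le_near_zero:
  fixes a q x :: real
  assumes "0 \<le> a" "0 < q" "\<bar>x\<bar> \<le> 1/2"
  shows "log_weight a q x \<le> 2 powr (a + q) * \<bar>x\<bar> powr q"
proof -
  have "log_weight a q x \<le> 2 powr a * (2 * \<bar>x\<bar>) powr q"
    unfolding log_weight_def
  proof (rule mult_mono)
    show "(1 + x) powr a \<le> 2 powr a"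
      using assms by (intro powr_mono2) auto
    show "\<bar>ln (1 + x)\<bar> powr q \<le> (2 * \<bar>x\<bar>) powr q"
      using assms abs_ln_one_plus_le[OF assms(3)] by (intro powr_mono2) auto
  qed simp_all
  also have "\<dots> = 2 powr (a + q) * \<bar>x\<bar> powr q"
    by (simp add: powr_mult powr_add)
  finally show ?thesis .
qed

lemma log_weight_le_near_minus_one:
  fixes a q x :: real
  assumes "0 < a" "0 < q" "-1 < x" "x \<le> 0"
  shows "log_weight a q x \<le> (q / a) powr q"
  unfolding log_weight_def using assms by (intro powr_mult_abs_ln_powr_le) auto

lemma log_weight_le_large:
  fixes a q d x :: real
  assumes "0 \<le> a" "0 < q" "0 < d" "1/2 \<le> x"
  shows "log_weight a q x \<le> 3 powr (a + d) * (q / d) powr q * x powr (a + d)"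
proof -
  have x: "1 \<le> 1 + x" "1 + x \<le> 3 * x"
    using assms by auto
  have "log_weight a q x \<le> (3 * x) powr a * ((q / d) powr q * (1 + x) powr d)"
    unfolding log_weight_def
  proof (rule mult_mono)
    show "(1 + x) powr a \<le> (3 * x) powr a"
      using assms x by (intro powr_mono2) auto
    show "\<bar>ln (1 + x)\<bar> powr q \<le> (q / d) powr q * (1 + x) powr d"
      using assms x by (intro abs_ln_powr_le_powr) auto
  qed simp_all
  also have "\<dots> \<le> (3 * x) powr a * ((q / d) powr q * (3 * x) powr d)"
    using assms x by (intro mult_left_mono powr_mono2) auto
  also have "\<dots> = 3 powr (a + d) * (q / d) powr q * x powr (a + d)"
    using assms by (simp add: powr_mult powr_add)
  finally show ?thesis .
qed

lemma log_weight_le_two_powers: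
  fixes a q m r :: real
  assumes "0 < a" "0 < q" "0 \<le> m" "m \<le> q" "a < r"
  obtains A B where "A > 0" "B > 0"
    "\<And>x. x > -1 \<Longrightarrow> log_weight a q x \<le> A * \<bar>x\<bar> powr r + B * \<bar>x\<bar> powr m"
proof
  define d where "d = r - a"
  define A where "A = 3 powr r * (q / d) powr q"
  define B where "B = 2 powr (a + q) + (q / a) powr q * 2 powr m"
  have d: "0 < d" "a + d = r"
    using assms by (auto simp: d_def)
  show "A > 0" "B > 0"
    using d assms by (auto simp: A_def B_def intro: add_pos_pos)
  fix x :: real
  assume x: "x > -1"
  have "log_weight a q x \<le> A * \<bar>x\<bar> powr r \<or> log_weight a q x \<le> B * \<bar>x\<bar> powr m"
  proof -
    consider "\<bar>x\<bar> \<le> 1/2" | "x < -1/2" | "x > 1/2"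
      by linarith
    then show ?thesis
    proof cases
      case 1
      have "log_weight a q x \<le> 2 powr (a + q) * \<bar>x\<bar> powr q"
        using assms 1 by (intro log_weight_le_near_zero) auto
      also have "\<dots> \<le> 2 powr (a + q) * \<bar>x\<bar> powr m"
        using assms 1 by (intro mult_left_mono powr_mono') auto
      also have "\<dots> \<le> B * \<bar>x\<bar> powr m"
        by (intro mult_right_mono) (auto simp: B_def)
      finally show ?thesis ..
    next
      case 2
      have "log_weight a q x \<le> (q / a) powr q * 2 powr m * (1/2) powr m"
        using assms x 2 log_weight_le_near_minus_one[of a q x] by (simp add: powr_divide)
      also have "\<dots> \<le> (q / a) powr q * 2 powr m * \<bar>x\<bar> powr m"
        using assms 2 by (intro mult_left_mono powr_mono2) auto
      also have "\<dots> \<le> B * \<bar>x\<bar> powr m"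
        by (intro mult_right_mono) (auto simp: B_def)
      finally show ?thesis ..
    next
      case 3
      have "log_weight a q x \<le> 3 powr (a + d) * (q / d) powr q * x powr (a + d)"
        using assms d 3 by (intro log_weight_le_large) auto
      then show ?thesis
        using d 3 by (simp add: A_def)
    qed
  qed
  moreover have "0 \<le> A * \<bar>x\<bar> powr r" "0 \<le> B * \<bar>x\<bar> powr m"
    using d assms by (auto simp: A_def B_def)
  ultimately show "log_weight a q x \<le> A * \<bar>x\<bar> powr r + B * \<bar>x\<bar> powr m"
    by linarith
qed

lemma abs_gfun_eq_log_weight:
  fixes p q \<mu> s :: real
  shows "\<bar>gfun p q \<mu> s\<bar> =
    (p - 1) powr (q - p + 1) / \<mu> powr q * log_weight (p - 1) q (\<mu> * s)"
proof -
  define L where "L = ln (1 + \<mu> * s)"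
  have "\<bar>L\<bar> powr (q - 1) * \<bar>L\<bar> = \<bar>L\<bar> powr q"
    by (cases "L = 0") (simp_all add: powr_mult_base mult.commute)
  then show ?thesis
    by (simp add: gfun_def log_weight_def L_def[symmetric] abs_mult mult.assoc)
qed

lemma abs_gfun_le_two_powers:
  fixes p q \<mu> m r :: real
  assumes "1 < p" "0 < q" "0 < \<mu>" "0 \<le> m" "m \<le> q" "p - 1 < r"
  shows "\<exists>c c'. c > 0 \<and> c' > 0 \<and>
    (\<forall>s. s > -1/\<mu> \<longrightarrow> \<bar>gfun p q \<mu> s\<bar> \<le> c * \<bar>s\<bar> powr r + c' * \<bar>s\<bar> powr m)"
proof -
  obtain A B where AB: "A > 0" "B > 0" and
    bound: "\<And>x. x > -1 \<Longrightarrow> log_weight (p - 1) q x \<le> A * \<bar>x\<bar> powr r + B * \<bar>x\<bar> powr m"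
    using log_weight_le_two_powers[of "p - 1" q m r] assms by auto
  define C where "C = (p - 1) powr (q - p + 1) / \<mu> powr q"
  have C: "C > 0"
    using assms by (simp add: C_def)
  have "\<bar>gfun p q \<mu> s\<bar> \<le> (C * A * \<mu> powr r) * \<bar>s\<bar> powr r + (C * B * \<mu> powr m) * \<bar>s\<bar> powr m"
    if s: "s > -1/\<mu>" for s
  proof -
    have "\<mu> * s > -1"
      using s assms by (simp add: field_simps)
    then have "\<bar>gfun p q \<mu> s\<bar> \<le> C * (A * \<bar>\<mu> * s\<bar> powr r + B * \<bar>\<mu> * s\<bar> powr m)"
      unfolding abs_gfun_eq_log_weight C_def[symmetric]
      using C by (intro mult_left_mono bound) auto
    also have "\<dots> = (C * A * \<mu> powr r) * \<bar>s\<bar> powr r + (C * B * \<mu> powr m) * \<bar>s\<bar> powr m"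
      using assms by (simp add: abs_mult powr_mult algebra_simps)
    finally show ?thesis .
  qed
  then show ?thesis
    using AB C assms by (intro exI[of _ "C * A * \<mu> powr r"] exI[of _ "C * B * \<mu> powr m"]) auto
qed

theorem lemma2p2:
  fixes p q \<mu> r :: real and N :: nat
  assumes "1 < p" and "p < real N" and "q > 0" and "\<mu> > 0"
    and "p - 1 < r" and "r < p"
  shows "(q \<ge> p - 1 \<longrightarrow> (\<exists>c0 c1. c0 > 0 \<and> c1 > 0 \<and>
            (\<forall>s. s > -1/\<mu> \<longrightarrow> \<bar>gfun p q \<mu> s\<bar> \<le> c0 * \<bar>s\<bar> powr r + c1 * \<bar>s\<bar> powr (p - 1))))
       \<and> (q < p - 1 \<longrightarrow> (\<exists>c1 c2. c1 > 0 \<and> c2 > 0 \<and>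
            (\<forall>s. s > -1/\<mu> \<longrightarrow> \<bar>gfun p q \<mu> s\<bar> \<le> c1 * \<bar>s\<bar> powr r + c2 * \<bar>s\<bar> powr q)))"
  using abs_gfun_le_two_powers[of p q \<mu> "p - 1" r] abs_gfun_le_two_powers[of p q \<mu> q r] assms
  by auto

end
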